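(* Let $l\ge0$, $\vec m\in\mathbb{Z}_+^l$ and $\mu,\mu'\in M_F(M_F(\mathbb{R}^d)^l)$. If $$E_\mu\Big[\prod_{i=1}^l\prod_{j=1}^{m_i}Y_i(\phi_{ij})\Big]=E_{\mu'}\Big[\prod_{i=1}^l\prod_{j=1}^{m_i}Y_i(\phi_{ij})\Big]$$ holds, with both sides finite, for every choice of $\phi_{ij}\in\mathcal{F}$, then the same identity holds for every choice of bounded continuous $\phi_{ij}:\mathbb{R}^d\to[0,\infty)$.
   Context: $M_F(E)$ denotes finite Borel measures on a separable metric space $E$ with the weak topology; $(Y_1,\dots,Y_l)$ is the coordinate variable on $M_F(\mathbb{R}^d)^l$, $Y_i(\phi)=\int\phi\,dY_i$, and $E_\mu[\cdot]=\int\cdot\,d\mu$. Standing assumption: $\mathcal{F}$ is a class of $\mathbb{C}$-valued bounded continuous functions on $\mathbb{R}^d$ that is closed under complex conjugation, is convergence determining for $M_F(\mathbb{R}^d)$, and contains the constant function $1$. Empty products equal $1$. *)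

theory Defs
  imports "HOL-Analysis.Analysis"
begin

definition MF_set :: "('a::euclidean_space) measure set" where
  "MF_set = {N. sets N = sets borel \<and> finite_measure N}"

definition bcont :: "('a::euclidean_space \<Rightarrow> real) \<Rightarrow> bool" where
  "bcont f \<longleftrightarrow> continuous_on UNIV f \<and> bounded (range f)"

definition weak_topology :: "('a::euclidean_space) measure topology" where
  "weak_topology = topology_generated_by
     (insert MF_set {{N \<in> MF_set. (\<integral>x. f x \<partial>N) \<in> U} | f U. bcont f \<and> open U})"

definition borel_of :: "'b topology \<Rightarrow> 'b measure" where
  "borel_of X = sigma (topspace X) {U. openin X U}"

definition MFl :: "nat \<Rightarrow> (nat \<Rightarrow> ('a::euclidean_space) measure) measure" where
  "MFl l = borel_of (product_topology (\<lambda>_. weak_topology) {..<l})"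

definition weak_conv :: "(nat \<Rightarrow> ('a::euclidean_space) measure) \<Rightarrow> 'a measure \<Rightarrow> bool" where
  "weak_conv Ns N \<longleftrightarrow> (\<forall>f. bcont f \<longrightarrow> (\<lambda>n. \<integral>x. f x \<partial>Ns n) \<longlonglongrightarrow> (\<integral>x. f x \<partial>N))"

definition conv_determining :: "(('a::euclidean_space) \<Rightarrow> complex) set \<Rightarrow> bool" where
  "conv_determining F \<longleftrightarrow>
     (\<forall>Ns N. (\<forall>n. Ns n \<in> MF_set) \<longrightarrow> N \<in> MF_set \<longrightarrow>
        (\<forall>f\<in>F. (\<lambda>n. \<integral>x. f x \<partial>Ns n) \<longlonglongrightarrow> (\<integral>x. f x \<partial>N)) \<longrightarrow> weak_conv Ns N)"

definition standing_F :: "(('a::euclidean_space) \<Rightarrow> complex) set \<Rightarrow> bool" where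
  "standing_F F \<longleftrightarrow>
     (\<forall>f\<in>F. continuous_on UNIV f \<and> bounded (range f)) \<and>
     (\<forall>f\<in>F. (\<lambda>x. cnj (f x)) \<in> F) \<and>
     conv_determining F \<and> (\<lambda>_. 1) \<in> F"

end

theory Submission
  imports Defs
begin

text \<open>
  Write \<open>Y(\<phi>)\<close> for \<open>\<integral>\<phi> dY\<close>.  The functions \<open>\<phi>\<^sub>i\<^sub>j \<in> F\<close> are replaced by the
  \<open>\<psi>\<^sub>i\<^sub>j\<close> one at a time.  In a single replacement step the product splits as
  \<open>H(Y) \<cdot> Y\<^sub>i(\<phi>)\<close>, where \<open>H\<close> collects the other factors, and one has to show:
  if \<open>\<integral>H(Y) Y\<^sub>i(f) d\<mu> = \<integral>H(Y) Y\<^sub>i(f) d\<mu>'\<close> for all \<open>f \<in> F\<close>, then the same holds for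
  every bounded continuous \<open>g\<close>.  Splitting \<open>H\<close> into real and imaginary parts (using
  that \<open>F\<close> is closed under conjugation) and these into positive and negative parts
  \<open>r\<^sub>1 - r\<^sub>2\<close> (integrable against the total mass \<open>Y\<^sub>i(\<real>\<^sup>d)\<close>, by the case \<open>f = 1\<close>), this reduces to a statement about the two finite measures
  \<open>L(A) = \<integral>r\<^sub>1(Y) Y\<^sub>i(A) d\<mu> + \<integral>r\<^sub>2(Y) Y\<^sub>i(A) d\<mu>'\<close> and \<open>L'\<close> (with \<open>\<mu>, \<mu>'\<close> swapped):
  they integrate every \<open>f \<in> F\<close> alike, so, \<open>F\<close> being convergence determining, the
  constant sequence \<open>L\<close> converges weakly to \<open>L'\<close>, i.e. \<open>L\<close> and \<open>L'\<close> integrate all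
  bounded continuous functions alike.
\<close>

section \<open>Measurability of integrals with respect to the coordinates\<close>

lemma topspace_weak_topology: "topspace (weak_topology :: 'a::euclidean_space measure topology) = MF_set"
  unfolding weak_topology_def by auto

lemma continuous_map_integral_weak:
  fixes f :: "'a::euclidean_space \<Rightarrow> real"
  assumes "bcont f"
  shows "continuous_map weak_topology euclideanreal (\<lambda>N. \<integral>x. f x \<partial>N)"
  unfolding continuous_map_def topspace_weak_topology
proof safe
  fix U :: "real set" assume "openin euclideanreal U"
  then have "{N \<in> MF_set. (\<integral>x. f x \<partial>N) \<in> U}
      \<in> insert MF_set {{N \<in> MF_set. (\<integral>x. f x \<partial>N) \<in> U} | f U. bcont f \<and> open U}"
    using assms by auto
  then show "openin weak_topology {N \<in> MF_set. (\<integral>x. f x \<partial>N) \<in> U}"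
    unfolding weak_topology_def by (rule topology_generated_by_Basis)
qed auto

lemma space_borel_of: "space (borel_of X) = topspace X"
  unfolding borel_of_def by (rule space_measure_of) (auto dest: openin_subset)

lemma continuous_map_measurable_borel_of:
  fixes g :: "'b \<Rightarrow> 'c::topological_space"
  assumes "continuous_map X euclidean g"
  shows "g \<in> borel_measurable (borel_of X)"
  unfolding borel_def
proof (rule measurable_measure_of)
  fix U :: "'c set" assume "U \<in> {S. open S}"
  then have "openin X {x \<in> topspace X. g x \<in> U}"
    using assms by (auto simp: continuous_map_def)
  moreover have "g -` U \<inter> space (borel_of X) = {x \<in> topspace X. g x \<in> U}"
    by (auto simp: space_borel_of)
  ultimately show "g -` U \<inter> space (borel_of X) \<in> sets (borel_of X)"
    unfolding borel_of_def
    by (subst sets_measure_of) (auto dest: openin_subset intro: sigma_sets.Basic)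
qed auto

lemma space_MFl: "space (MFl l :: (nat \<Rightarrow> 'a::euclidean_space measure) measure) = PiE {..<l} (\<lambda>_. MF_set)"
  unfolding MFl_def space_borel_of by (simp add: topspace_weak_topology topspace_product_topology)

lemma MFl_coordinate:
  assumes "sets M = sets (MFl l)" "Y \<in> space M" "i < l"
  shows "(Y i :: 'a::euclidean_space measure) \<in> MF_set"
  using assms sets_eq_imp_space_eq[OF assms(1)] by (auto simp: space_MFl)

lemma measurable_coordinate_integral:
  fixes f :: "'a::euclidean_space \<Rightarrow> real"
  assumes "sets M = sets (MFl l)" "bcont f" "i < l"
  shows "(\<lambda>Y. \<integral>x. f x \<partial>(Y i)) \<in> borel_measurable M"
proof -
  have "continuous_map (product_topology (\<lambda>_. weak_topology) {..<l}) euclideanreal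
          ((\<lambda>N. \<integral>x. f x \<partial>N) \<circ> (\<lambda>Y. Y i))"
    using continuous_map_compose[OF continuous_map_product_projection[of i "{..<l}" "\<lambda>_. weak_topology"]
        continuous_map_integral_weak[OF assms(2)]] assms(3) by simp
  then have "(\<lambda>Y. \<integral>x. f x \<partial>(Y i)) \<in> borel_measurable (MFl l)"
    unfolding MFl_def by (auto dest: continuous_map_measurable_borel_of simp: o_def)
  then show ?thesis using assms(1) by (simp cong: measurable_cong_sets)
qed

lemma MF_setD:
  assumes "N \<in> MF_set"
  shows "finite_measure N" "sets N = sets borel" "space N = UNIV"
  using assms unfolding MF_set_def by (auto dest: sets_eq_imp_space_eq)

lemma bcont_bound:
  assumes "bcont f"
  obtains B where "\<And>x. \<bar>f x\<bar> \<le> B" "B \<ge> 0"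
proof -
  from assms obtain B where "\<And>x. norm (f x) \<le> B"
    unfolding bcont_def bounded_iff by blast
  then show ?thesis using that[of B] by (metis abs_ge_zero order_trans real_norm_def)
qed

lemma borel_measurable_MF:
  assumes "N \<in> MF_set" "g \<in> borel_measurable borel"
  shows "g \<in> borel_measurable N"
  using assms MF_setD(2)[OF assms(1)] by (simp cong: measurable_cong_sets)

lemma bcont_borel_measurable: "bcont f \<Longrightarrow> f \<in> borel_measurable borel"
  unfolding bcont_def by (intro borel_measurable_continuous_onI) simp

lemma bcont_integrable:
  fixes f :: "'a::euclidean_space \<Rightarrow> real"
  assumes "bcont f" "N \<in> MF_set"
  shows "integrable N f"
proof -
  obtain B where "\<And>x. \<bar>f x\<bar> \<le> B" using bcont_bound[OF assms(1)] by blast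
  interpret finite_measure N using MF_setD[OF assms(2)] by simp
  show ?thesis
    by (rule integrable_const_bound[where B=B])
       (auto simp: \<open>\<And>x. \<bar>f x\<bar> \<le> B\<close> borel_measurable_MF[OF assms(2) bcont_borel_measurable[OF assms(1)]])
qed

lemma abs_integral_bcont_le:
  fixes f :: "'a::euclidean_space \<Rightarrow> real"
  assumes "bcont f" "N \<in> MF_set" "\<And>x. \<bar>f x\<bar> \<le> B"
  shows "\<bar>\<integral>x. f x \<partial>N\<bar> \<le> B * measure N UNIV"
proof -
  interpret finite_measure N using MF_setD[OF assms(2)] by simp
  have "\<bar>\<integral>x. f x \<partial>N\<bar> \<le> (\<integral>x. \<bar>f x\<bar> \<partial>N)" by (rule integral_abs_bound)
  also have "\<dots> \<le> (\<integral>x. B \<partial>N)"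
    by (rule integral_mono) (auto intro: bcont_integrable[OF assms(1,2)] assms(3))
  also have "\<dots> = B * measure N UNIV" using MF_setD[OF assms(2)] by simp
  finally show ?thesis .
qed

lemma bcont_const: "bcont (\<lambda>_. c)"
  unfolding bcont_def by auto

lemma bcont_max_0: "bcont g \<Longrightarrow> bcont (\<lambda>x. max (g x) 0)"
  unfolding bcont_def bounded_iff
  by (auto intro: continuous_intros) (smt (verit) real_norm_def)

lemma bcont_minus: "bcont g \<Longrightarrow> bcont (\<lambda>x. - g x)"
  unfolding bcont_def by (auto intro: continuous_intros simp: bounded_iff)

definition cbcont :: "('a::euclidean_space \<Rightarrow> complex) \<Rightarrow> bool" where
  "cbcont f \<longleftrightarrow> continuous_on UNIV f \<and> bounded (range f)"

lemma standing_F_cbcont: "standing_F F \<Longrightarrow> f \<in> F \<Longrightarrow> cbcont f"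
  unfolding standing_F_def cbcont_def by blast

lemma cbcont_Re: "cbcont f \<Longrightarrow> bcont (\<lambda>x. Re (f x))"
  unfolding cbcont_def bcont_def bounded_iff
  by (auto intro: continuous_intros) (meson abs_Re_le_cmod order_trans real_norm_def)

lemma cbcont_Im: "cbcont f \<Longrightarrow> bcont (\<lambda>x. Im (f x))"
  unfolding cbcont_def bcont_def bounded_iff
  by (auto intro: continuous_intros) (meson abs_Im_le_cmod order_trans real_norm_def)

lemma cbcont_of_real: "bcont f \<Longrightarrow> cbcont (\<lambda>x. complex_of_real (f x))"
  unfolding cbcont_def bcont_def bounded_iff by (auto intro: continuous_intros)

lemma cbcont_integral:
  fixes f :: "'a::euclidean_space \<Rightarrow> complex"
  assumes "cbcont f" "N \<in> MF_set"
  shows "integrable N f"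
    and "(\<integral>x. f x \<partial>N) = complex_of_real (\<integral>x. Re (f x) \<partial>N) + \<i> * complex_of_real (\<integral>x. Im (f x) \<partial>N)"
proof -
  have re: "integrable N (\<lambda>x. complex_of_real (Re (f x)))"
    and im: "integrable N (\<lambda>x. \<i> * complex_of_real (Im (f x)))"
    using bcont_integrable[OF cbcont_Re[OF assms(1)] assms(2)]
      bcont_integrable[OF cbcont_Im[OF assms(1)] assms(2)] by simp_all
  have f: "f = (\<lambda>x. complex_of_real (Re (f x)) + \<i> * complex_of_real (Im (f x)))"
    by (simp add: fun_eq_iff complex_eq_iff)
  show "integrable N f" by (subst f) (rule Bochner_Integration.integrable_add[OF re im])
  show "(\<integral>x. f x \<partial>N) = complex_of_real (\<integral>x. Re (f x) \<partial>N) + \<i> * complex_of_real (\<integral>x. Im (f x) \<partial>N)"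
    by (subst f, subst Bochner_Integration.integral_add[OF re im]) simp
qed

lemma measurable_coordinate_cintegral:
  fixes f :: "'a::euclidean_space \<Rightarrow> complex"
  assumes "sets M = sets (MFl l)" "cbcont f" "i < l"
  shows "(\<lambda>Y. \<integral>x. f x \<partial>(Y i)) \<in> borel_measurable M"
proof -
  have "(\<lambda>Y. complex_of_real (\<integral>x. Re (f x) \<partial>(Y i)) + \<i> * complex_of_real (\<integral>x. Im (f x) \<partial>(Y i)))
          \<in> borel_measurable M"
    using measurable_coordinate_integral[OF assms(1) cbcont_Re[OF assms(2)] assms(3)]
      measurable_coordinate_integral[OF assms(1) cbcont_Im[OF assms(2)] assms(3)]
    by measurable
  then show ?thesis
    by (rule measurable_cong[THEN iffD1, rotated])
       (simp add: cbcont_integral(2)[OF assms(2) MFl_coordinate[OF assms(1) _ assms(3)]])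
qed

section \<open>Measurability of the masses \<open>Y \<mapsto> Y\<^sub>i(A)\<close>\<close>

text \<open>Continuous functions increasing to the indicator of an open set \<open>U \<noteq> \<real>\<^sup>d\<close>.\<close>
definition open_approx :: "'a::euclidean_space set \<Rightarrow> nat \<Rightarrow> 'a \<Rightarrow> real" where
  "open_approx U n x = min 1 (real n * infdist x (- U))"

lemma bcont_open_approx: "bcont (open_approx U n)"
  unfolding bcont_def bounded_iff open_approx_def
  by (auto intro!: continuous_intros exI[of _ 1] simp: infdist_nonneg)

lemma open_approx_tendsto:
  assumes "open U" "U \<noteq> UNIV"
  shows "(\<lambda>n. open_approx U n x) \<longlonglongrightarrow> indicator U x"
proof (cases "x \<in> U")
  case True
  have d: "infdist x (- U) > 0"
    using assms True by (intro infdist_pos_not_in_closed) auto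
  obtain k :: nat where k: "1 / infdist x (- U) < k" using reals_Archimedean2 by blast
  have "open_approx U n x = 1" if "k \<le> n" for n
  proof -
    have "1 < real k * infdist x (- U)" using k d by (simp add: divide_less_eq mult.commute)
    also have "\<dots> \<le> real n * infdist x (- U)" using that d by (intro mult_right_mono) auto
    finally show ?thesis unfolding open_approx_def by simp
  qed
  then have "(\<lambda>n. open_approx U n x) \<longlonglongrightarrow> 1"
    by (intro tendsto_eventually) (auto simp: eventually_sequentially)
  then show ?thesis using True by simp
qed (simp add: open_approx_def)

lemma integral_open_approx_tendsto:
  assumes "open U" "U \<noteq> UNIV" "N \<in> MF_set"
  shows "(\<lambda>n. \<integral>x. open_approx U n x \<partial>N) \<longlonglongrightarrow> measure N U"
proof -
  interpret finite_measure N using MF_setD[OF assms(3)] by simp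
  have "(\<lambda>n. \<integral>x. open_approx U n x \<partial>N) \<longlonglongrightarrow> (\<integral>x. indicator U x \<partial>N)"
  proof (rule integral_dominated_convergence[where w="\<lambda>_. 1"])
    show "indicator U \<in> borel_measurable N"
      using assms(1) MF_setD(2)[OF assms(3)] by (intro borel_measurable_indicator) simp
    show "open_approx U n \<in> borel_measurable N" for n
      by (rule borel_measurable_MF[OF assms(3) bcont_borel_measurable[OF bcont_open_approx]])
    show "AE x in N. (\<lambda>n. open_approx U n x) \<longlonglongrightarrow> indicator U x"
      using open_approx_tendsto[OF assms(1,2)] by simp
    show "AE x in N. norm (open_approx U n x) \<le> 1" for n
      unfolding open_approx_def by (auto simp: infdist_nonneg)
  qed simp
  then show ?thesis using MF_setD[OF assms(3)] by simp
qed

lemma measurable_coordinate_measure_open: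
  assumes "sets M = sets (MFl l)" "open U" "i < l"
  shows "(\<lambda>Y. measure (Y i :: 'a::euclidean_space measure) U) \<in> borel_measurable M"
proof (cases "U = UNIV")
  case True
  have "(\<lambda>Y. \<integral>x. (1::real) \<partial>(Y i :: 'a measure)) \<in> borel_measurable M"
    by (rule measurable_coordinate_integral[OF assms(1) bcont_const assms(3)])
  then show ?thesis
    by (rule measurable_cong[THEN iffD1, rotated])
       (use True in \<open>simp add: MF_setD(3)[OF MFl_coordinate[OF assms(1) _ assms(3)]]\<close>)
next
  case False
  show ?thesis
  proof (rule borel_measurable_LIMSEQ_real)
    show "(\<lambda>Y. \<integral>x. open_approx U n x \<partial>(Y i)) \<in> borel_measurable M" for n
      by (rule measurable_coordinate_integral[OF assms(1) bcont_open_approx assms(3)])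
    show "(\<lambda>n. \<integral>x. open_approx U n x \<partial>(Y i)) \<longlonglongrightarrow> measure (Y i) U" if "Y \<in> space M" for Y
      using integral_open_approx_tendsto[OF assms(2) False] MFl_coordinate[OF assms(1) that assms(3)] .
  qed
qed

lemma measurable_coordinate_emeasure_open:
  assumes sM: "sets M = sets (MFl l)" and "open U" and i: "i < l"
  shows "(\<lambda>Y. emeasure (Y i :: 'a::euclidean_space measure) U) \<in> borel_measurable M"
proof -
  have "(\<lambda>Y. ennreal (measure (Y i :: 'a measure) U)) \<in> borel_measurable M"
    using measurable_coordinate_measure_open[OF sM \<open>open U\<close> i] by measurable
  then show ?thesis
    by (rule measurable_cong[THEN iffD1, rotated])
       (auto dest!: MFl_coordinate[OF sM _ i] MF_setD(1) intro: finite_measure.emeasure_eq_measure[symmetric])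
qed

text \<open>From open sets to all Borel sets, by Dynkin's \<open>\<pi>\<close>-\<open>\<lambda>\<close> argument.\<close>
lemma measurable_coordinate_emeasure:
  assumes sM: "sets M = sets (MFl l)" and A: "A \<in> sets borel" and i: "i < l"
  shows "(\<lambda>Y. emeasure (Y i :: 'a::euclidean_space measure) A) \<in> borel_measurable M"
proof -
  note emeasure_open = measurable_coordinate_emeasure_open[OF sM _ i]
  have "Int_stable {S::'a set. open S}" by (auto simp: Int_stable_def)
  moreover have "{S::'a set. open S} \<subseteq> Pow UNIV" by simp
  moreover have "A \<in> sigma_sets UNIV {S::'a set. open S}" using A by (simp add: sets_borel)
  ultimately show ?thesis
  proof (induction rule: sigma_sets_induct_disjoint)
    case (basic A)
    then show ?case using emeasure_open by simp
  next
    case (compl A)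
    have "(\<lambda>Y. emeasure (Y i :: 'a measure) UNIV - emeasure (Y i) A) \<in> borel_measurable M"
      using compl emeasure_open[OF open_UNIV] by measurable
    then show ?case
    proof (rule measurable_cong[THEN iffD1, rotated])
      fix Y assume "Y \<in> space M"
      then have Y: "Y i \<in> MF_set" by (rule MFl_coordinate[OF sM _ i])
      then interpret finite_measure "Y i" by (rule MF_setD(1))
      show "emeasure (Y i) UNIV - emeasure (Y i) A = emeasure (Y i) (UNIV - A)"
        using compl(1) MF_setD[OF Y] by (intro emeasure_Diff[symmetric]) (auto simp: sets_borel)
    qed
  next
    case (union F)
    have "(\<lambda>Y. \<Sum>n. emeasure (Y i :: 'a measure) (F n)) \<in> borel_measurable M"
      using union by measurable
    then show ?case
    proof (rule measurable_cong[THEN iffD1, rotated])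
      fix Y assume "Y \<in> space M"
      then have Y: "Y i \<in> MF_set" by (rule MFl_coordinate[OF sM _ i])
      show "(\<Sum>n. emeasure (Y i) (F n)) = emeasure (Y i) (\<Union>n. F n)"
        using union(1,2) MF_setD(2)[OF Y] by (intro suminf_emeasure) (auto simp: sets_borel)
    qed
  qed simp_all
qed

lemma measurable_coordinate_nn_integral:
  fixes g :: "'a::euclidean_space \<Rightarrow> ennreal"
  assumes sM: "sets M = sets (MFl l)" and i: "i < l" and g: "g \<in> borel_measurable borel"
  shows "(\<lambda>Y. \<integral>\<^sup>+x. g x \<partial>(Y i)) \<in> borel_measurable M"
  using g
proof (induction rule: borel_measurable_induct)
  case (cong f g)
  then have "f = g" by auto
  then show ?case using cong(4) by simp
next
  case (set A)
  show ?case
    using measurable_coordinate_emeasure[OF sM set i]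
    by (rule measurable_cong[THEN iffD1, rotated])
       (use set MF_setD(2) MFl_coordinate[OF sM _ i] in \<open>auto intro!: nn_integral_indicator[symmetric]\<close>)
next
  case (mult u c)
  have "(\<lambda>Y. c * \<integral>\<^sup>+x. u x \<partial>(Y i)) \<in> borel_measurable M"
    using \<open>(\<lambda>Y. \<integral>\<^sup>+x. u x \<partial>(Y i)) \<in> borel_measurable M\<close> by measurable
  then show ?case
    by (rule measurable_cong[THEN iffD1, rotated])
       (use \<open>u \<in> borel_measurable borel\<close> MFl_coordinate[OF sM _ i]
         in \<open>auto intro!: nn_integral_cmult[symmetric] borel_measurable_MF\<close>)
next
  case (add u v)
  have "(\<lambda>Y. (\<integral>\<^sup>+x. v x \<partial>(Y i)) + (\<integral>\<^sup>+x. u x \<partial>(Y i))) \<in> borel_measurable M"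
    using \<open>(\<lambda>Y. \<integral>\<^sup>+x. u x \<partial>(Y i)) \<in> borel_measurable M\<close>
      \<open>(\<lambda>Y. \<integral>\<^sup>+x. v x \<partial>(Y i)) \<in> borel_measurable M\<close> by measurable
  then show ?case
    by (rule measurable_cong[THEN iffD1, rotated])
       (use \<open>u \<in> borel_measurable borel\<close> \<open>v \<in> borel_measurable borel\<close> MFl_coordinate[OF sM _ i]
         in \<open>auto intro!: nn_integral_add[symmetric] borel_measurable_MF\<close>)
next
  case (seq U)
  have "(\<lambda>Y. SUP n. \<integral>\<^sup>+x. U n x \<partial>(Y i)) \<in> borel_measurable M"
    using \<open>\<And>n. (\<lambda>Y. \<integral>\<^sup>+x. U n x \<partial>(Y i)) \<in> borel_measurable M\<close> by measurable
  then show ?case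
  proof (rule measurable_cong[THEN iffD1, rotated])
    fix Y assume "Y \<in> space M"
    then have "Y i \<in> MF_set" by (rule MFl_coordinate[OF sM _ i])
    then show "(SUP n. \<integral>\<^sup>+x. U n x \<partial>(Y i)) = (\<integral>\<^sup>+x. (SUP n. U n) x \<partial>(Y i))"
      unfolding SUP_apply using \<open>\<And>n. U n \<in> borel_measurable borel\<close> \<open>incseq U\<close>
      by (intro nn_integral_monotone_convergence_SUP[symmetric]) (auto intro: borel_measurable_MF)
  qed
qed

section \<open>Mixtures of the coordinate measures\<close>

locale coordinate_space =
  fixes M :: "(nat \<Rightarrow> 'a::euclidean_space measure) measure" and l i :: nat
  assumes sets_M: "sets M = sets (MFl l)" and coordinate: "i < l"
begin

lemma coordinate_MF: "Y \<in> space M \<Longrightarrow> Y i \<in> MF_set"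
  by (rule MFl_coordinate[OF sets_M _ coordinate])

end

definition weighted_mean :: "(nat \<Rightarrow> 'a::euclidean_space measure) measure
    \<Rightarrow> ((nat \<Rightarrow> 'a measure) \<Rightarrow> ennreal) \<Rightarrow> nat \<Rightarrow> ('a \<Rightarrow> ennreal) \<Rightarrow> ennreal" where
  "weighted_mean M w i g = (\<integral>\<^sup>+Y. w Y * (\<integral>\<^sup>+x. g x \<partial>(Y i)) \<partial>M)"

locale weighted_coordinate = coordinate_space M l i
  for M :: "(nat \<Rightarrow> 'a::euclidean_space measure) measure" and l i :: nat +
  fixes w :: "(nat \<Rightarrow> 'a measure) \<Rightarrow> ennreal"
  assumes w: "w \<in> borel_measurable M"
begin

lemma measurable_weighted:
  "g \<in> borel_measurable borel \<Longrightarrow> (\<lambda>Y. w Y * (\<integral>\<^sup>+x. g x \<partial>(Y i))) \<in> borel_measurable M"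
  using w measurable_coordinate_nn_integral[OF sets_M coordinate] by measurable

lemma weighted_mean_cmult:
  assumes "g \<in> borel_measurable borel"
  shows "weighted_mean M w i (\<lambda>x. c * g x) = c * weighted_mean M w i g"
proof -
  have "weighted_mean M w i (\<lambda>x. c * g x) = (\<integral>\<^sup>+Y. c * (w Y * (\<integral>\<^sup>+x. g x \<partial>(Y i))) \<partial>M)"
    unfolding weighted_mean_def using assms coordinate_MF
    by (intro nn_integral_cong) (simp add: nn_integral_cmult borel_measurable_MF ac_simps)
  also have "\<dots> = c * weighted_mean M w i g"
    unfolding weighted_mean_def by (rule nn_integral_cmult[OF measurable_weighted[OF assms]])
  finally show ?thesis .
qed

lemma weighted_mean_add:
  assumes "g \<in> borel_measurable borel" "h \<in> borel_measurable borel"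
  shows "weighted_mean M w i (\<lambda>x. g x + h x) = weighted_mean M w i g + weighted_mean M w i h"
proof -
  have "weighted_mean M w i (\<lambda>x. g x + h x)
      = (\<integral>\<^sup>+Y. w Y * (\<integral>\<^sup>+x. g x \<partial>(Y i)) + w Y * (\<integral>\<^sup>+x. h x \<partial>(Y i)) \<partial>M)"
    unfolding weighted_mean_def using assms coordinate_MF
    by (intro nn_integral_cong) (simp add: nn_integral_add borel_measurable_MF distrib_left)
  also have "\<dots> = weighted_mean M w i g + weighted_mean M w i h"
    unfolding weighted_mean_def using assms by (intro nn_integral_add measurable_weighted)
  finally show ?thesis .
qed

lemma incseq_weighted_mean:
  assumes "incseq U"
  shows "incseq (\<lambda>n. weighted_mean M w i (U n))"
  using assms unfolding incseq_def le_fun_def weighted_mean_def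
  by (auto intro!: nn_integral_mono mult_left_mono)

lemma weighted_mean_SUP:
  assumes "\<And>n. U n \<in> borel_measurable borel" "incseq U"
  shows "weighted_mean M w i (SUP n. U n) = (SUP n. weighted_mean M w i (U n))"
proof -
  have "weighted_mean M w i (SUP n. U n) = (\<integral>\<^sup>+Y. (SUP n. w Y * (\<integral>\<^sup>+x. U n x \<partial>(Y i))) \<partial>M)"
    unfolding weighted_mean_def SUP_apply using assms coordinate_MF
    by (intro nn_integral_cong)
       (simp add: nn_integral_monotone_convergence_SUP borel_measurable_MF SUP_mult_left_ennreal)
  also have "\<dots> = (SUP n. weighted_mean M w i (U n))"
    unfolding weighted_mean_def using assms
    by (intro nn_integral_monotone_convergence_SUP measurable_weighted)
       (auto simp: incseq_def le_fun_def intro!: mult_left_mono nn_integral_mono)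
  finally show ?thesis .
qed

lemma weighted_mean_indicator_countably_additive:
  assumes "range A \<subseteq> sets borel" "disjoint_family A"
  shows "(\<Sum>n. weighted_mean M w i (indicator (A n))) = weighted_mean M w i (indicator (\<Union>n. A n))"
proof -
  have "(\<Sum>n. weighted_mean M w i (indicator (A n)))
      = (\<integral>\<^sup>+Y. (\<Sum>n. w Y * (\<integral>\<^sup>+x. indicator (A n) x \<partial>(Y i))) \<partial>M)"
    unfolding weighted_mean_def using assms(1)
    by (intro nn_integral_suminf[symmetric] measurable_weighted) auto
  also have "\<dots> = weighted_mean M w i (indicator (\<Union>n. A n))"
    unfolding weighted_mean_def
  proof (intro nn_integral_cong)
    fix Y assume "Y \<in> space M"
    then have "sets (Y i) = sets borel" by (intro MF_setD(2) coordinate_MF)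
    then show "(\<Sum>n. w Y * (\<integral>\<^sup>+x. indicator (A n) x \<partial>(Y i))) = w Y * (\<integral>\<^sup>+x. indicator (\<Union>n. A n) x \<partial>(Y i))"
      using assms by (subst (1 2) nn_integral_indicator) (auto simp: ennreal_suminf_cmult suminf_emeasure)
  qed
  finally show ?thesis .
qed

end

definition mixture :: "(nat \<Rightarrow> 'a::euclidean_space measure) measure \<Rightarrow> ((nat \<Rightarrow> 'a measure) \<Rightarrow> ennreal)
    \<Rightarrow> (nat \<Rightarrow> 'a measure) measure \<Rightarrow> ((nat \<Rightarrow> 'a measure) \<Rightarrow> ennreal) \<Rightarrow> nat \<Rightarrow> 'a measure" where
  "mixture M w M' w' i = measure_of UNIV (sets borel)
     (\<lambda>A. weighted_mean M w i (indicator A) + weighted_mean M' w' i (indicator A))"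

lemma sets_mixture [simp]: "sets (mixture M w M' w' i) = sets borel"
  unfolding mixture_def using sets.sigma_sets_eq[of borel] by (simp add: sets_measure_of_conv)

lemma borel_measurable_mixture_iff [simp]:
  "f \<in> borel_measurable (mixture M w M' w' i) \<longleftrightarrow> f \<in> borel_measurable borel"
  by (simp cong: measurable_cong_sets)

locale two_weighted_coordinates =
  first: weighted_coordinate M l i w + second: weighted_coordinate M' l i w'
  for M M' :: "(nat \<Rightarrow> 'a::euclidean_space measure) measure" and l i :: nat
    and w w' :: "(nat \<Rightarrow> 'a measure) \<Rightarrow> ennreal"
begin

lemma emeasure_mixture:
  assumes "A \<in> sets borel"
  shows "emeasure (mixture M w M' w' i) A = weighted_mean M w i (indicator A) + weighted_mean M' w' i (indicator A)"
  unfolding mixture_def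
proof (rule emeasure_measure_of_sigma[OF _ _ _ assms])
  show "sigma_algebra UNIV (sets (borel :: 'a measure))"
    using sets.sigma_algebra_axioms[of "borel :: 'a measure"] by simp
  show "countably_additive (sets borel)
          (\<lambda>A. weighted_mean M w i (indicator A) + weighted_mean M' w' i (indicator A))"
    unfolding countably_additive_def
    by (auto simp: suminf_add[symmetric] first.weighted_mean_indicator_countably_additive
                   second.weighted_mean_indicator_countably_additive)
qed (simp add: positive_def weighted_mean_def)

lemma nn_integral_mixture:
  assumes "g \<in> borel_measurable borel"
  shows "(\<integral>\<^sup>+x. g x \<partial>mixture M w M' w' i) = weighted_mean M w i g + weighted_mean M' w' i g"
  using assms
proof (induction rule: borel_measurable_induct)
  case (cong f g)
  then have "f = g" by auto
  then show ?case using cong(4) by simp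
next
  case (set A)
  then show ?case by (simp add: emeasure_mixture)
next
  case (mult u c)
  then show ?case
    by (simp add: nn_integral_cmult first.weighted_mean_cmult second.weighted_mean_cmult distrib_left)
next
  case (add u v)
  then show ?case
    by (simp add: nn_integral_add first.weighted_mean_add second.weighted_mean_add ac_simps)
next
  case (seq U)
  then have "(\<integral>\<^sup>+x. (SUP n. U n) x \<partial>mixture M w M' w' i)
      = (SUP n. weighted_mean M w i (U n) + weighted_mean M' w' i (U n))"
    unfolding SUP_apply by (simp add: nn_integral_monotone_convergence_SUP)
  also have "\<dots> = (SUP n. weighted_mean M w i (U n)) + (SUP n. weighted_mean M' w' i (U n))"
    using seq by (intro ennreal_SUP_add first.incseq_weighted_mean second.incseq_weighted_mean)
  also have "\<dots> = weighted_mean M w i (SUP n. U n) + weighted_mean M' w' i (SUP n. U n)"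
    using seq by (simp add: first.weighted_mean_SUP second.weighted_mean_SUP)
  finally show ?case .
qed

end

definition mass_weight :: "(nat \<Rightarrow> 'a::euclidean_space measure) measure \<Rightarrow> nat
    \<Rightarrow> ((nat \<Rightarrow> 'a measure) \<Rightarrow> real) \<Rightarrow> bool" where
  "mass_weight M i s \<longleftrightarrow> s \<in> borel_measurable M \<and> integrable M (\<lambda>Y. s Y * measure (Y i) UNIV)"

definition weighted_integral :: "(nat \<Rightarrow> 'a::euclidean_space measure) measure
    \<Rightarrow> ((nat \<Rightarrow> 'a measure) \<Rightarrow> real) \<Rightarrow> nat \<Rightarrow> ('a \<Rightarrow> real) \<Rightarrow> real" where
  "weighted_integral M s i g = (\<integral>Y. s Y * (\<integral>x. g x \<partial>(Y i)) \<partial>M)"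

context coordinate_space
begin

lemma measurable_mass: "(\<lambda>Y. measure (Y i) UNIV) \<in> borel_measurable M"
  by (rule measurable_coordinate_measure_open[OF sets_M open_UNIV coordinate])

lemma mass_weight_dominated:
  assumes "mass_weight M i s" "r \<in> borel_measurable M" "\<And>Y. \<bar>r Y\<bar> \<le> \<bar>s Y\<bar>"
  shows "mass_weight M i r"
  unfolding mass_weight_def
proof
  show "integrable M (\<lambda>Y. r Y * measure (Y i) UNIV)"
  proof (rule Bochner_Integration.integrable_bound)
    show "integrable M (\<lambda>Y. s Y * measure (Y i) UNIV)" using assms(1) by (simp add: mass_weight_def)
    show "AE Y in M. norm (r Y * measure (Y i) UNIV) \<le> norm (s Y * measure (Y i) UNIV)"
      using assms(3) by (auto simp: abs_mult intro!: mult_right_mono)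
  qed (use assms(2) measurable_mass in measurable)
qed (rule assms(2))

lemma mass_weight_max_0:
  assumes "mass_weight M i s"
  shows "mass_weight M i (\<lambda>Y. max (s Y) 0)" "mass_weight M i (\<lambda>Y. max (- s Y) 0)"
  using assms by (intro mass_weight_dominated[OF assms]; auto simp: mass_weight_def)+

lemma integrable_weighted:
  assumes s: "mass_weight M i s" and g: "bcont g"
  shows "integrable M (\<lambda>Y. s Y * (\<integral>x. g x \<partial>(Y i)))"
proof -
  obtain B where B: "\<And>x. \<bar>g x\<bar> \<le> B" "B \<ge> 0" using bcont_bound[OF g] by blast
  show ?thesis
  proof (rule Bochner_Integration.integrable_bound)
    show "integrable M (\<lambda>Y. B * (s Y * measure (Y i) UNIV))" using s by (simp add: mass_weight_def)
    show "(\<lambda>Y. s Y * (\<integral>x. g x \<partial>(Y i))) \<in> borel_measurable M"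
      using s measurable_coordinate_integral[OF sets_M g coordinate]
      unfolding mass_weight_def by (intro borel_measurable_times) auto
    show "AE Y in M. norm (s Y * (\<integral>x. g x \<partial>(Y i))) \<le> norm (B * (s Y * measure (Y i) UNIV))"
    proof (rule AE_I2)
      fix Y assume "Y \<in> space M"
      then have "\<bar>\<integral>x. g x \<partial>(Y i)\<bar> \<le> B * measure (Y i) UNIV"
        by (intro abs_integral_bcont_le[OF g coordinate_MF B(1)])
      then have "\<bar>s Y\<bar> * \<bar>\<integral>x. g x \<partial>(Y i)\<bar> \<le> B * (\<bar>s Y\<bar> * measure (Y i) UNIV)"
        by (metis abs_ge_zero mult.left_commute mult_left_mono)
      then show "norm (s Y * (\<integral>x. g x \<partial>(Y i))) \<le> norm (B * (s Y * measure (Y i) UNIV))"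
        using B(2) by (simp add: abs_mult)
    qed
  qed
qed

lemma weighted_integral_diff_fun:
  assumes "mass_weight M i s" "bcont g" "bcont h"
  shows "weighted_integral M s i (\<lambda>x. g x - h x) = weighted_integral M s i g - weighted_integral M s i h"
proof -
  have "weighted_integral M s i (\<lambda>x. g x - h x)
      = (\<integral>Y. s Y * (\<integral>x. g x \<partial>(Y i)) - s Y * (\<integral>x. h x \<partial>(Y i)) \<partial>M)"
    unfolding weighted_integral_def using coordinate_MF assms(2,3)
    by (intro Bochner_Integration.integral_cong)
       (simp_all add: Bochner_Integration.integral_diff bcont_integrable right_diff_distrib)
  also have "\<dots> = weighted_integral M s i g - weighted_integral M s i h"
    unfolding weighted_integral_def using assms by (intro Bochner_Integration.integral_diff integrable_weighted)
  finally show ?thesis .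
qed

lemma weighted_integral_diff_weight:
  assumes "mass_weight M i s" "mass_weight M i s'" "bcont g"
  shows "weighted_integral M (\<lambda>Y. s Y - s' Y) i g = weighted_integral M s i g - weighted_integral M s' i g"
  unfolding weighted_integral_def left_diff_distrib
  using assms by (intro Bochner_Integration.integral_diff integrable_weighted)

lemma weighted_mean_eq_weighted_integral:
  assumes s: "mass_weight M i s" "\<And>Y. s Y \<ge> 0" and g: "bcont g" "\<And>x. g x \<ge> 0"
  shows "weighted_mean M (\<lambda>Y. ennreal (s Y)) i (\<lambda>x. ennreal (g x)) = ennreal (weighted_integral M s i g)"
proof -
  have "weighted_mean M (\<lambda>Y. ennreal (s Y)) i (\<lambda>x. ennreal (g x))
      = (\<integral>\<^sup>+Y. ennreal (s Y * (\<integral>x. g x \<partial>(Y i))) \<partial>M)"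
    unfolding weighted_mean_def
  proof (rule nn_integral_cong)
    fix Y assume "Y \<in> space M"
    then have "(\<integral>\<^sup>+x. ennreal (g x) \<partial>(Y i)) = ennreal (\<integral>x. g x \<partial>(Y i))"
      using g by (intro nn_integral_eq_integral bcont_integrable coordinate_MF) auto
    then show "ennreal (s Y) * (\<integral>\<^sup>+x. ennreal (g x) \<partial>(Y i)) = ennreal (s Y * (\<integral>x. g x \<partial>(Y i)))"
      using s(2) g(2) by (simp add: ennreal_mult)
  qed
  also have "\<dots> = ennreal (weighted_integral M s i g)"
    unfolding weighted_integral_def using s g
    by (intro nn_integral_eq_integral integrable_weighted) auto
  finally show ?thesis .
qed

lemma weighted_integral_complex:
  assumes s: "mass_weight M i s" and f: "cbcont f"
  shows "(\<integral>Y. complex_of_real (s Y) * (\<integral>x. f x \<partial>(Y i)) \<partial>M)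
     = complex_of_real (weighted_integral M s i (\<lambda>x. Re (f x)))
       + \<i> * complex_of_real (weighted_integral M s i (\<lambda>x. Im (f x)))"
proof -
  have re: "integrable M (\<lambda>Y. complex_of_real (s Y * (\<integral>x. Re (f x) \<partial>(Y i))))"
    and im: "integrable M (\<lambda>Y. \<i> * complex_of_real (s Y * (\<integral>x. Im (f x) \<partial>(Y i))))"
    using integrable_weighted[OF s cbcont_Re[OF f]] integrable_weighted[OF s cbcont_Im[OF f]]
    by (simp_all only: integrable_of_real integrable_mult_right)
  have "(\<integral>Y. complex_of_real (s Y) * (\<integral>x. f x \<partial>(Y i)) \<partial>M)
      = (\<integral>Y. complex_of_real (s Y * (\<integral>x. Re (f x) \<partial>(Y i)))
              + \<i> * complex_of_real (s Y * (\<integral>x. Im (f x) \<partial>(Y i))) \<partial>M)"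
    using coordinate_MF
    by (intro Bochner_Integration.integral_cong) (simp_all add: cbcont_integral(2)[OF f] algebra_simps)
  also have "\<dots> = complex_of_real (weighted_integral M s i (\<lambda>x. Re (f x)))
       + \<i> * complex_of_real (weighted_integral M s i (\<lambda>x. Im (f x)))"
    unfolding weighted_integral_def Bochner_Integration.integral_add[OF re im]
      integral_mult_right_zero integral_complex_of_real ..
  finally show ?thesis .
qed

end

lemma weighted_integral_nonneg: "(\<And>Y. s Y \<ge> 0) \<Longrightarrow> (\<And>x. g x \<ge> 0) \<Longrightarrow> weighted_integral M s i g \<ge> 0"
  unfolding weighted_integral_def by (auto intro!: integral_nonneg_AE AE_I2)

locale mixture_weights = M: coordinate_space M l i + M': coordinate_space M' l i
  for M M' :: "(nat \<Rightarrow> 'a::euclidean_space measure) measure" and l i :: nat +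
  fixes r r' :: "(nat \<Rightarrow> 'a measure) \<Rightarrow> real"
  assumes r: "mass_weight M i r" "\<And>Y. r Y \<ge> 0"
    and r': "mass_weight M' i r'" "\<And>Y. r' Y \<ge> 0"
begin

sublocale two_weighted_coordinates M M' l i "\<lambda>Y. ennreal (r Y)" "\<lambda>Y. ennreal (r' Y)"
  using r(1) r'(1) M.sets_M M'.sets_M M.coordinate
  by unfold_locales (auto simp: mass_weight_def)

abbreviation L :: "'a measure" where
  "L \<equiv> mixture M (\<lambda>Y. ennreal (r Y)) M' (\<lambda>Y. ennreal (r' Y)) i"

lemma nn_integral_L:
  assumes g: "bcont g" "\<And>x. g x \<ge> 0"
  shows "(\<integral>\<^sup>+x. ennreal (g x) \<partial>L) = ennreal (weighted_integral M r i g + weighted_integral M' r' i g)"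
proof -
  have "(\<lambda>x. ennreal (g x)) \<in> borel_measurable borel"
    using bcont_borel_measurable[OF g(1)] by measurable
  then have "(\<integral>\<^sup>+x. ennreal (g x) \<partial>L)
      = ennreal (weighted_integral M r i g) + ennreal (weighted_integral M' r' i g)"
    by (simp add: nn_integral_mixture M.weighted_mean_eq_weighted_integral[OF r g]
                  M'.weighted_mean_eq_weighted_integral[OF r' g])
  then show ?thesis using r(2) r'(2) g(2) by (simp add: weighted_integral_nonneg)
qed

lemma L_MF: "L \<in> MF_set"
proof -
  have "emeasure L (space L) = (\<integral>\<^sup>+x. ennreal 1 \<partial>L)" by simp
  also have "\<dots> < \<infinity>" by (subst nn_integral_L) (auto intro: bcont_const)
  finally have "finite_measure L" by (intro finite_measureI) simp
  then show ?thesis unfolding MF_set_def by simp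
qed

lemma integral_L:
  assumes g: "bcont g"
  shows "(\<integral>x. g x \<partial>L) = weighted_integral M r i g + weighted_integral M' r' i g"
proof -
  have nonneg: "(\<integral>x. h x \<partial>L) = weighted_integral M r i h + weighted_integral M' r' i h"
    if h: "bcont h" "\<And>x. h x \<ge> 0" for h
  proof -
    have "ennreal (\<integral>x. h x \<partial>L) = (\<integral>\<^sup>+x. ennreal (h x) \<partial>L)"
      using h by (intro nn_integral_eq_integral[symmetric] bcont_integrable L_MF) auto
    also have "\<dots> = ennreal (weighted_integral M r i h + weighted_integral M' r' i h)"
      by (rule nn_integral_L[OF h])
    finally show ?thesis
      using h(2) r(2) r'(2)
      by (subst (asm) ennreal_inj) (auto intro!: integral_nonneg_AE add_nonneg_nonneg weighted_integral_nonneg)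
  qed
  let ?gp = "\<lambda>x. max (g x) 0" and ?gm = "\<lambda>x. max (- g x) 0"
  have bounded: "bcont ?gp" "bcont ?gm" using g by (simp_all add: bcont_max_0 bcont_minus)
  have split: "(\<lambda>x. ?gp x - ?gm x) = g" by auto
  have "(\<integral>x. g x \<partial>L) = (\<integral>x. ?gp x \<partial>L) - (\<integral>x. ?gm x \<partial>L)"
    using Bochner_Integration.integral_diff[OF bcont_integrable[OF bounded(1) L_MF]
        bcont_integrable[OF bounded(2) L_MF]] by (simp add: split)
  moreover have "weighted_integral M r i g = weighted_integral M r i ?gp - weighted_integral M r i ?gm"
    using M.weighted_integral_diff_fun[OF r(1) bounded] by (simp add: split)
  moreover have "weighted_integral M' r' i g = weighted_integral M' r' i ?gp - weighted_integral M' r' i ?gm"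
    using M'.weighted_integral_diff_fun[OF r'(1) bounded] by (simp add: split)
  ultimately show ?thesis by (simp add: nonneg bounded)
qed

end

section \<open>Extension from \<open>F\<close> to all bounded continuous functions\<close>

text \<open>This is where the class \<open>F\<close> being convergence determining enters: the constant
  sequence \<open>N\<close> converges to \<open>N'\<close> against \<open>F\<close>, hence weakly.\<close>
lemma integrals_agree_from_F:
  fixes F :: "('a::euclidean_space \<Rightarrow> complex) set"
  assumes "standing_F F" "N \<in> MF_set" "N' \<in> MF_set"
    and "\<And>f. f \<in> F \<Longrightarrow> (\<integral>x. f x \<partial>N) = (\<integral>x. f x \<partial>N')"
    and "bcont g"
  shows "(\<integral>x. g x \<partial>N) = (\<integral>x. g x \<partial>N')"
proof -
  have "conv_determining F" using assms(1) by (simp add: standing_F_def)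
  then have "weak_conv (\<lambda>n. N) N'"
    unfolding conv_determining_def using assms(2-4) by simp
  then have "(\<lambda>n. \<integral>x. g x \<partial>N) \<longlonglongrightarrow> (\<integral>x. g x \<partial>N')"
    using assms(5) unfolding weak_conv_def by blast
  then show ?thesis by (simp add: LIMSEQ_const_iff)
qed

text \<open>The single-step extension for a real weight \<open>s\<close>: compare the mixtures
  \<open>L = r\<^sub>1 \<mu> + r\<^sub>2 \<mu>'\<close> and \<open>L' = r\<^sub>1 \<mu>' + r\<^sub>2 \<mu>\<close>, where \<open>s = r\<^sub>1 - r\<^sub>2\<close>.\<close>
lemma weighted_integral_eq_extend:
  fixes F :: "('a::euclidean_space \<Rightarrow> complex) set"
  assumes F: "standing_F F"
    and M: "coordinate_space M l i" and M': "coordinate_space M' l i"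
    and s: "mass_weight M i s" "mass_weight M' i s"
    and on_F: "\<And>f. f \<in> F \<Longrightarrow> (\<integral>Y. complex_of_real (s Y) * (\<integral>x. f x \<partial>(Y i)) \<partial>M)
                              = (\<integral>Y. complex_of_real (s Y) * (\<integral>x. f x \<partial>(Y i)) \<partial>M')"
    and g: "bcont g"
  shows "weighted_integral M s i g = weighted_integral M' s i g"
proof -
  interpret M: coordinate_space M l i by (rule M)
  interpret M': coordinate_space M' l i by (rule M')
  define r1 where "r1 Y = max (s Y) 0" for Y
  define r2 where "r2 Y = max (- s Y) 0" for Y
  have s_split: "(\<lambda>Y. r1 Y - r2 Y) = s" unfolding r1_def r2_def by auto
  have nonneg: "r1 Y \<ge> 0" "r2 Y \<ge> 0" for Y unfolding r1_def r2_def by auto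
  have r: "mass_weight M i r1" "mass_weight M i r2" "mass_weight M' i r1" "mass_weight M' i r2"
    unfolding r1_def r2_def using M.mass_weight_max_0[OF s(1)] M'.mass_weight_max_0[OF s(2)] by auto
  interpret L: mixture_weights M M' l i r1 r2
    using M M' r nonneg by (intro mixture_weights.intro mixture_weights_axioms.intro) auto
  interpret L': mixture_weights M' M l i r1 r2
    using M M' r nonneg by (intro mixture_weights.intro mixture_weights_axioms.intro) auto
  have key: "(\<integral>x. h x \<partial>L.L) = (\<integral>x. h x \<partial>L'.L) \<longleftrightarrow>
             weighted_integral M s i h = weighted_integral M' s i h" if h: "bcont h" for h
    using L.integral_L[OF h] L'.integral_L[OF h]
      M.weighted_integral_diff_weight[OF r(1,2) h] M'.weighted_integral_diff_weight[OF r(3,4) h]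
    by (simp add: s_split) linarith
  have "(\<integral>x. f x \<partial>L.L) = (\<integral>x. f x \<partial>L'.L)" if f: "f \<in> F" for f
  proof -
    have bounded: "cbcont f" by (rule standing_F_cbcont[OF F f])
    have "weighted_integral M s i (\<lambda>x. Re (f x)) = weighted_integral M' s i (\<lambda>x. Re (f x))"
      "weighted_integral M s i (\<lambda>x. Im (f x)) = weighted_integral M' s i (\<lambda>x. Im (f x))"
      using on_F[OF f] by (simp_all add: M.weighted_integral_complex[OF s(1) bounded]
                                         M'.weighted_integral_complex[OF s(2) bounded] complex_eq_iff)
    then show ?thesis
      using key[OF cbcont_Re[OF bounded]] key[OF cbcont_Im[OF bounded]]
      by (simp add: cbcont_integral(2)[OF bounded L.L_MF] cbcont_integral(2)[OF bounded L'.L_MF])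
  qed
  then have "(\<integral>x. g x \<partial>L.L) = (\<integral>x. g x \<partial>L'.L)"
    by (intro integrals_agree_from_F[OF F L.L_MF L'.L_MF _ g])
  then show ?thesis using key[OF g] by simp
qed

definition moments_agree :: "'b measure \<Rightarrow> 'b measure \<Rightarrow> ('b \<Rightarrow> complex) \<Rightarrow> bool" where
  "moments_agree \<mu> \<mu>' h \<longleftrightarrow> integrable \<mu> h \<and> integrable \<mu>' h \<and> (\<integral>Y. h Y \<partial>\<mu>) = (\<integral>Y. h Y \<partial>\<mu>')"

text \<open>Real and imaginary parts of a complex weight \<open>h\<close>, expressed through the moments of
  \<open>h \<cdot> z\<close> and \<open>h \<cdot> cnj z\<close>; this is why \<open>F\<close> is required to be closed under conjugation.\<close>
lemma integral_Re_Im_weight: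
  fixes h z :: "'b \<Rightarrow> complex"
  assumes hz: "integrable M (\<lambda>x. h x * z x)" and hz': "integrable M (\<lambda>x. h x * cnj (z x))"
  shows "(\<integral>x. complex_of_real (Re (h x)) * z x \<partial>M)
           = ((\<integral>x. h x * z x \<partial>M) + cnj (\<integral>x. h x * cnj (z x) \<partial>M)) / 2"
    and "(\<integral>x. complex_of_real (Im (h x)) * z x \<partial>M)
           = ((\<integral>x. h x * z x \<partial>M) - cnj (\<integral>x. h x * cnj (z x) \<partial>M)) / (2 * \<i>)"
proof -
  have cnj_hz': "integrable M (\<lambda>x. cnj (h x * cnj (z x)))" by (rule integrable_cnj[OF hz'])
  have re: "complex_of_real (Re c) * y = (c * y + cnj (c * cnj y)) / 2" for c y :: complex
    by (simp add: complex_eq_iff algebra_simps)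
  have "(\<integral>x. complex_of_real (Re (h x)) * z x \<partial>M) = (\<integral>x. (h x * z x + cnj (h x * cnj (z x))) / 2 \<partial>M)"
    by (simp only: re)
  also have "\<dots> = ((\<integral>x. h x * z x \<partial>M) + cnj (\<integral>x. h x * cnj (z x) \<partial>M)) / 2"
    by (simp only: integral_divide_zero Bochner_Integration.integral_add[OF hz cnj_hz']
        Bochner_Integration.integral_cnj)
  finally show "(\<integral>x. complex_of_real (Re (h x)) * z x \<partial>M)
           = ((\<integral>x. h x * z x \<partial>M) + cnj (\<integral>x. h x * cnj (z x) \<partial>M)) / 2" .
  have im: "complex_of_real (Im c) * y = (c * y - cnj (c * cnj y)) / (2 * \<i>)" for c y :: complex
  proof -
    have "c * y - cnj (c * cnj y) = (c - cnj c) * y" by (simp add: algebra_simps)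
    also have "\<dots> = (2 * \<i>) * (complex_of_real (Im c) * y)" by (simp add: complex_diff_cnj mult_ac)
    finally show ?thesis by simp
  qed
  have "(\<integral>x. complex_of_real (Im (h x)) * z x \<partial>M) = (\<integral>x. (h x * z x - cnj (h x * cnj (z x))) / (2 * \<i>) \<partial>M)"
    by (simp only: im)
  also have "\<dots> = ((\<integral>x. h x * z x \<partial>M) - cnj (\<integral>x. h x * cnj (z x) \<partial>M)) / (2 * \<i>)"
    by (simp only: integral_divide_zero Bochner_Integration.integral_diff[OF hz cnj_hz']
        Bochner_Integration.integral_cnj)
  finally show "(\<integral>x. complex_of_real (Im (h x)) * z x \<partial>M)
           = ((\<integral>x. h x * z x \<partial>M) - cnj (\<integral>x. h x * cnj (z x) \<partial>M)) / (2 * \<i>)" .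
qed

context coordinate_space
begin

lemma mass_weight_Re_Im:
  assumes H: "H \<in> borel_measurable M" and mass: "integrable M (\<lambda>Y. H Y * (\<integral>x. 1 \<partial>(Y i)))"
  shows "mass_weight M i (\<lambda>Y. Re (H Y))" "mass_weight M i (\<lambda>Y. Im (H Y))"
proof -
  have "integrable M (\<lambda>Y. norm (H Y * (\<integral>x. 1 \<partial>(Y i))))" using mass by (rule integrable_norm)
  then have "integrable M (\<lambda>Y. cmod (H Y) * measure (Y i) UNIV)"
    by (rule Bochner_Integration.integrable_cong[THEN iffD1, OF refl, rotated])
       (simp add: norm_mult MF_setD(3)[OF coordinate_MF])
  then have norm: "mass_weight M i (\<lambda>Y. cmod (H Y))" using H by (simp add: mass_weight_def)
  show "mass_weight M i (\<lambda>Y. Re (H Y))" "mass_weight M i (\<lambda>Y. Im (H Y))"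
    using H by (auto intro!: mass_weight_dominated[OF norm] simp: abs_Re_le_cmod abs_Im_le_cmod)
qed

lemma integral_complex_weight:
  assumes re: "mass_weight M i (\<lambda>Y. Re (H Y))" and im: "mass_weight M i (\<lambda>Y. Im (H Y))" and g: "bcont g"
  shows "integrable M (\<lambda>Y. H Y * complex_of_real (\<integral>x. g x \<partial>(Y i)))"
    and "(\<integral>Y. H Y * complex_of_real (\<integral>x. g x \<partial>(Y i)) \<partial>M)
       = complex_of_real (weighted_integral M (\<lambda>Y. Re (H Y)) i g)
         + \<i> * complex_of_real (weighted_integral M (\<lambda>Y. Im (H Y)) i g)"
proof -
  have parts: "H Y * complex_of_real (\<integral>x. g x \<partial>(Y i))
      = complex_of_real (Re (H Y) * (\<integral>x. g x \<partial>(Y i))) + \<i> * complex_of_real (Im (H Y) * (\<integral>x. g x \<partial>(Y i)))"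
    for Y by (simp add: complex_eq_iff)
  have "integrable M (\<lambda>Y. complex_of_real (Re (H Y) * (\<integral>x. g x \<partial>(Y i))))"
    and "integrable M (\<lambda>Y. \<i> * complex_of_real (Im (H Y) * (\<integral>x. g x \<partial>(Y i))))"
    using integrable_weighted[OF re g] integrable_weighted[OF im g]
    by (simp_all only: integrable_of_real integrable_mult_right)
  note integrals = this
  show "integrable M (\<lambda>Y. H Y * complex_of_real (\<integral>x. g x \<partial>(Y i)))"
    unfolding parts by (rule Bochner_Integration.integrable_add[OF integrals])
  show "(\<integral>Y. H Y * complex_of_real (\<integral>x. g x \<partial>(Y i)) \<partial>M)
       = complex_of_real (weighted_integral M (\<lambda>Y. Re (H Y)) i g)
         + \<i> * complex_of_real (weighted_integral M (\<lambda>Y. Im (H Y)) i g)"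
    unfolding parts weighted_integral_def Bochner_Integration.integral_add[OF integrals]
      integral_mult_right_zero integral_complex_of_real ..
qed

end

lemma moments_agree_extend:
  fixes F :: "('a::euclidean_space \<Rightarrow> complex) set"
  assumes F: "standing_F F"
    and M: "coordinate_space M l i" and M': "coordinate_space M' l i"
    and H: "H \<in> borel_measurable M" "H \<in> borel_measurable M'"
    and on_F: "\<And>f. f \<in> F \<Longrightarrow> moments_agree M M' (\<lambda>Y. H Y * (\<integral>x. f x \<partial>(Y i)))"
    and g: "bcont g"
  shows "moments_agree M M' (\<lambda>Y. H Y * complex_of_real (\<integral>x. g x \<partial>(Y i)))"
proof -
  interpret M: coordinate_space M l i by (rule M)
  interpret M': coordinate_space M' l i by (rule M')
  have "(\<lambda>_. 1) \<in> F" using F by (simp add: standing_F_def)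
  from on_F[OF this] have weights:
    "mass_weight M i (\<lambda>Y. Re (H Y))" "mass_weight M i (\<lambda>Y. Im (H Y))"
    "mass_weight M' i (\<lambda>Y. Re (H Y))" "mass_weight M' i (\<lambda>Y. Im (H Y))"
    using M.mass_weight_Re_Im[OF H(1)] M'.mass_weight_Re_Im[OF H(2)] by (auto simp: moments_agree_def)
  have "(\<integral>Y. complex_of_real (Re (H Y)) * (\<integral>x. f x \<partial>(Y i)) \<partial>M)
          = (\<integral>Y. complex_of_real (Re (H Y)) * (\<integral>x. f x \<partial>(Y i)) \<partial>M') \<and>
        (\<integral>Y. complex_of_real (Im (H Y)) * (\<integral>x. f x \<partial>(Y i)) \<partial>M)
          = (\<integral>Y. complex_of_real (Im (H Y)) * (\<integral>x. f x \<partial>(Y i)) \<partial>M')" if f: "f \<in> F" for f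
  proof -
    have "(\<lambda>x. cnj (f x)) \<in> F" using F f by (simp add: standing_F_def)
    from on_F[OF this] have "moments_agree M M' (\<lambda>Y. H Y * cnj (\<integral>x. f x \<partial>(Y i)))" by simp
    with on_F[OF f] show ?thesis
      by (simp add: moments_agree_def integral_Re_Im_weight)
  qed
  then have "weighted_integral M (\<lambda>Y. Re (H Y)) i g = weighted_integral M' (\<lambda>Y. Re (H Y)) i g"
    "weighted_integral M (\<lambda>Y. Im (H Y)) i g = weighted_integral M' (\<lambda>Y. Im (H Y)) i g"
    by (intro weighted_integral_eq_extend[OF F M M' _ _ _ g] weights; blast)+
  then show ?thesis
    unfolding moments_agree_def
    by (simp add: M.integral_complex_weight[OF weights(1,2) g] M'.integral_complex_weight[OF weights(3,4) g])
qed

section \<open>Replacing the test functions one at a time\<close>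

definition product_moment :: "nat \<Rightarrow> (nat \<Rightarrow> nat) \<Rightarrow> (nat \<Rightarrow> nat \<Rightarrow> 'a::euclidean_space \<Rightarrow> complex)
    \<Rightarrow> (nat \<Rightarrow> 'a measure) \<Rightarrow> complex" where
  "product_moment l m \<phi> Y = (\<Prod>i<l. \<Prod>j<m i. \<integral>x. \<phi> i j x \<partial>(Y i))"

lemma product_moment_split:
  assumes "(i0, j0) \<in> Sigma {..<l} (\<lambda>i. {..<m i})"
  shows "product_moment l m \<phi> Y
       = (\<Prod>(i, j) \<in> Sigma {..<l} (\<lambda>i. {..<m i}) - {(i0, j0)}. \<integral>x. \<phi> i j x \<partial>(Y i))
         * (\<integral>x. \<phi> i0 j0 x \<partial>(Y i0))"
  unfolding product_moment_def using assms
  by (simp add: prod.Sigma prod.remove[of _ "(i0, j0)"] split_def mult.commute)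

lemma moments_agree_replace_one:
  fixes F :: "('a::euclidean_space \<Rightarrow> complex) set" and \<phi> :: "nat \<Rightarrow> nat \<Rightarrow> 'a \<Rightarrow> complex"
  assumes F: "standing_F F" and sets: "sets \<mu> = sets (MFl l)" "sets \<mu>' = sets (MFl l)"
    and pos: "(i0, j0) \<in> Sigma {..<l} (\<lambda>i. {..<m i})"
    and others: "\<And>i j. i < l \<Longrightarrow> j < m i \<Longrightarrow> (i, j) \<noteq> (i0, j0) \<Longrightarrow> cbcont (\<phi> i j)"
    and on_F: "\<And>f. f \<in> F \<Longrightarrow> moments_agree \<mu> \<mu>' (product_moment l m (\<phi>(i0 := (\<phi> i0)(j0 := f))))"
    and g: "bcont g"
  shows "moments_agree \<mu> \<mu>' (product_moment l m (\<phi>(i0 := (\<phi> i0)(j0 := \<lambda>x. complex_of_real (g x)))))"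
proof -
  define H where "H Y = (\<Prod>(i, j) \<in> Sigma {..<l} (\<lambda>i. {..<m i}) - {(i0, j0)}. \<integral>x. \<phi> i j x \<partial>(Y i))"
    for Y :: "nat \<Rightarrow> 'a measure"
  have product: "product_moment l m (\<phi>(i0 := (\<phi> i0)(j0 := f))) = (\<lambda>Y. H Y * (\<integral>x. f x \<partial>(Y i0)))" for f
  proof
    fix Y :: "nat \<Rightarrow> 'a measure"
    have "(\<Prod>(i, j) \<in> Sigma {..<l} (\<lambda>i. {..<m i}) - {(i0, j0)}. \<integral>x. (\<phi>(i0 := (\<phi> i0)(j0 := f))) i j x \<partial>(Y i))
        = H Y"
      unfolding H_def
    proof (rule prod.cong[OF refl])
      fix p assume "p \<in> Sigma {..<l} (\<lambda>i. {..<m i}) - {(i0, j0)}"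
      then show "(case p of (i, j) \<Rightarrow> \<integral>x. (\<phi>(i0 := (\<phi> i0)(j0 := f))) i j x \<partial>(Y i))
          = (case p of (i, j) \<Rightarrow> \<integral>x. \<phi> i j x \<partial>(Y i))"
        by (cases p) (auto split: if_splits)
    qed
    then show "product_moment l m (\<phi>(i0 := (\<phi> i0)(j0 := f))) Y = H Y * (\<integral>x. f x \<partial>(Y i0))"
      by (simp add: product_moment_split[OF pos])
  qed
  have "H \<in> borel_measurable X" if "sets X = sets (MFl l)" for X
    unfolding H_def[abs_def] split_def
    by (intro borel_measurable_prod measurable_coordinate_cintegral[OF that]) (auto intro!: others)
  then show ?thesis
    using pos sets on_F g unfolding product integral_complex_of_real
    by (intro moments_agree_extend[OF F]) (auto simp: coordinate_space_def)
qed

lemma moments_agree_replace: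
  fixes F :: "('a::euclidean_space \<Rightarrow> complex) set" and \<psi> :: "nat \<Rightarrow> nat \<Rightarrow> 'a \<Rightarrow> real"
  assumes F: "standing_F F" and sets: "sets \<mu> = sets (MFl l)" "sets \<mu>' = sets (MFl l)"
    and on_F: "\<And>\<phi>. (\<forall>i<l. \<forall>j<m i. \<phi> i j \<in> F) \<Longrightarrow> moments_agree \<mu> \<mu>' (product_moment l m \<phi>)"
    and \<psi>: "\<And>i j. i < l \<Longrightarrow> j < m i \<Longrightarrow> bcont (\<psi> i j)"
    and "finite S" "S \<subseteq> Sigma {..<l} (\<lambda>i. {..<m i})"
    and \<phi>_S: "\<And>i j. (i, j) \<in> S \<Longrightarrow> \<phi> i j = (\<lambda>x. complex_of_real (\<psi> i j x))"
    and \<phi>_F: "\<And>i j. i < l \<Longrightarrow> j < m i \<Longrightarrow> (i, j) \<notin> S \<Longrightarrow> \<phi> i j \<in> F"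
  shows "moments_agree \<mu> \<mu>' (product_moment l m \<phi>)"
  using \<open>finite S\<close> \<open>S \<subseteq> _\<close> \<phi>_S \<phi>_F
proof (induction S arbitrary: \<phi> rule: finite_subset_induct)
  case empty
  then show ?case by (intro on_F) auto
next
  case (insert a S)
  obtain i0 j0 where a: "a = (i0, j0)" by (cases a)
  with insert.hyps have pos: "(i0, j0) \<in> Sigma {..<l} (\<lambda>i. {..<m i})" and new: "(i0, j0) \<notin> S" by auto
  have updated: "\<phi>(i0 := (\<phi> i0)(j0 := \<lambda>x. complex_of_real (\<psi> i0 j0 x))) = \<phi>"
    using insert.prems(1) a by (auto simp: fun_eq_iff)
  have "moments_agree \<mu> \<mu>' (product_moment l m (\<phi>(i0 := (\<phi> i0)(j0 := \<lambda>x. complex_of_real (\<psi> i0 j0 x)))))"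
  proof (rule moments_agree_replace_one[OF F sets pos])
    show "cbcont (\<phi> i j)" if "i < l" "j < m i" for i j
      using insert.prems that
      by (cases "(i, j) \<in> insert a S") (auto intro: cbcont_of_real[OF \<psi>] standing_F_cbcont[OF F])
    show "moments_agree \<mu> \<mu>' (product_moment l m (\<phi>(i0 := (\<phi> i0)(j0 := f))))" if "f \<in> F" for f
      using insert.prems that new a by (intro insert.IH) auto
    show "bcont (\<psi> i0 j0)" using pos by (intro \<psi>) auto
  qed
  then show ?case by (simp only: updated)
qed

lemma nn_integral_eq_if_moments_agree:
  fixes R :: "'b \<Rightarrow> real"
  assumes "moments_agree \<mu> \<mu>' (\<lambda>Y. complex_of_real (R Y))" "\<And>Y. R Y \<ge> 0"
  shows "(\<integral>\<^sup>+Y. ennreal (R Y) \<partial>\<mu>) = (\<integral>\<^sup>+Y. ennreal (R Y) \<partial>\<mu>')"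
proof -
  have "integrable \<mu> R" "integrable \<mu>' R" "(\<integral>Y. R Y \<partial>\<mu>) = (\<integral>Y. R Y \<partial>\<mu>')"
    using assms(1) by (simp_all add: moments_agree_def complex_of_real_integrable_eq)
  then show ?thesis using assms(2) by (simp add: nn_integral_eq_integral)
qed

theorem lemma3p5:
  fixes F :: "('a::euclidean_space \<Rightarrow> complex) set"
    and l :: nat and m :: "nat \<Rightarrow> nat"
    and \<mu> \<mu>' :: "(nat \<Rightarrow> 'a measure) measure"
  assumes "standing_F F"
    and "sets \<mu> = sets (MFl l)" and "finite_measure \<mu>"
    and "sets \<mu>' = sets (MFl l)" and "finite_measure \<mu>'"
    and "\<And>\<phi> :: nat \<Rightarrow> nat \<Rightarrow> 'a \<Rightarrow> complex.
           (\<forall>i<l. \<forall>j<m i. \<phi> i j \<in> F) \<Longrightarrow>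
           integrable \<mu> (\<lambda>Y. \<Prod>i<l. \<Prod>j<m i. \<integral>x. \<phi> i j x \<partial>(Y i))
         \<and> integrable \<mu>' (\<lambda>Y. \<Prod>i<l. \<Prod>j<m i. \<integral>x. \<phi> i j x \<partial>(Y i))
         \<and> (\<integral>Y. (\<Prod>i<l. \<Prod>j<m i. \<integral>x. \<phi> i j x \<partial>(Y i)) \<partial>\<mu>)
           = (\<integral>Y. (\<Prod>i<l. \<Prod>j<m i. \<integral>x. \<phi> i j x \<partial>(Y i)) \<partial>\<mu>')"
    and "\<forall>i<l. \<forall>j<m i. bcont (\<psi> i j) \<and> (\<forall>x. \<psi> i j x \<ge> 0)"
  shows "(\<integral>\<^sup>+Y. ennreal (\<Prod>i<l. \<Prod>j<m i. \<integral>x. \<psi> i j x \<partial>(Y i)) \<partial>\<mu>)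
       = (\<integral>\<^sup>+Y. ennreal (\<Prod>i<l. \<Prod>j<m i. \<integral>x. \<psi> i j x \<partial>(Y i)) \<partial>\<mu>')"
proof (rule nn_integral_eq_if_moments_agree)
  have on_F: "moments_agree \<mu> \<mu>' (product_moment l m \<phi>)" if "\<forall>i<l. \<forall>j<m i. \<phi> i j \<in> F" for \<phi>
    using assms(6)[OF that] unfolding moments_agree_def product_moment_def .
  have "moments_agree \<mu> \<mu>' (product_moment l m (\<lambda>i j x. complex_of_real (\<psi> i j x)))"
    by (rule moments_agree_replace[OF assms(1,2,4) on_F, of \<psi> "Sigma {..<l} (\<lambda>i. {..<m i})"])
       (use assms(7) in auto)
  then show "moments_agree \<mu> \<mu>' (\<lambda>Y. complex_of_real (\<Prod>i<l. \<Prod>j<m i. \<integral>x. \<psi> i j x \<partial>(Y i)))"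
    by (simp add: product_moment_def[abs_def])
  show "(\<Prod>i<l. \<Prod>j<m i. \<integral>x. \<psi> i j x \<partial>(Y i)) \<ge> 0" for Y
    using assms(7) by (auto intro!: prod_nonneg integral_nonneg_AE)
qed

end
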